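(* Let $\Sigma_1,\Sigma_2$ be amply equivalent complete fans, $G_i=\mathrm{Hom}_{\mathbf Z}(\mathrm{Cl}(X_{\Sigma_i}),\mathbf C^\times)$, and $\varphi:\Gamma(G_1)_{\mathbf Q}\to\Gamma(G_2)_{\mathbf Q}$ the isomorphism induced by $\Psi$. Then the dual map $\varphi^*:\mathrm{Cl}(X_{\Sigma_2})_{\mathbf Q}\to\mathrm{Cl}(X_{\Sigma_1})_{\mathbf Q}$ is an isomorphism that restricts to an isomorphism $\mathrm{Pic}(X_{\Sigma_2})_{\mathbf Q}\cong\mathrm{Pic}(X_{\Sigma_1})_{\mathbf Q}$, and $\varphi^*(\mathrm{Amp}(X_{\Sigma_2})_{\mathbf Q})=\mathrm{Amp}(X_{\Sigma_1})_{\mathbf Q}$.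
   Context: For a fan $\Sigma$: rays $\Sigma(1)$, primitive generators $u_\rho$, torus-invariant divisors $D_\rho$. A primitive collection is $C\subset\Sigma(1)$ not contained in $\sigma(1)$ for any cone $\sigma$ while every proper subset is. Complete fans $\Sigma_1\subset(N_1)_{\mathbf R}$, $\Sigma_2\subset(N_2)_{\mathbf R}$ with $\mathrm{rank}N_1=\mathrm{rank}N_2$ are amply equivalent via a bijection $\Psi:\Sigma_1(1)\to\Sigma_2(1)$ if $\Psi$ maps primitive collections exactly onto primitive collections and, for all integers $(a_\rho)$, $\sum a_\rho u_\rho=0\iff\sum a_\rho u_{\Psi(\rho)}=0$. $\Gamma(G_i)=\{b\in\mathbf Z^{\Sigma_i(1)}:\sum b_\rho u_\rho=0\}$; $\varphi$ sends $(b_\rho)_{\rho\in\Sigma_1(1)}$ to $(b_{\Psi^{-1}(\rho')})_{\rho'\in\Sigma_2(1)}$. Under the perfect pairings $\mathrm{Cl}(X_{\Sigma_i})_{\mathbf Q}\times\Gamma(G_i)_{\mathbf Q}\to\mathbf Q$, $\langle\sum a_\rho D_\rho,b\rangle=\sum a_\rho b_\rho$, the dual $\varphi^*$ sends the class of $\sum_\rho q_\rho D_{\Psi(\rho)}$ to the class of $\sum_\rho q_\rho D_\rho$. $\mathrm{Amp}(X)_{\mathbf Q}$ is the rational cone over ample Cartier divisors in $\mathrm{Pic}(X)_{\mathbf Q}$. *)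

theory Defs
  imports "HOL-Analysis.Analysis"
begin

text \<open>Lattice N = Z^n inside N_R = R^n (dimension given by the finite type 'n).
  Cones of a fan are subsets of real^'n; a ray is identified with the 1-dimensional cone.\<close>

definition lattice :: "(real^'n) set" where
  "lattice = {x. \<forall>i. x $ i \<in> \<int>}"

definition rational_cone :: "(real^'n) set \<Rightarrow> bool" where
  "rational_cone \<sigma> \<longleftrightarrow> (\<exists>S. finite S \<and> S \<subseteq> lattice \<and> \<sigma> = convex_cone hull S)"

definition strongly_convex :: "(real^'n) set \<Rightarrow> bool" where
  "strongly_convex \<sigma> \<longleftrightarrow> \<sigma> \<inter> uminus ` \<sigma> = {0}"

definition is_fan :: "(real^'n) set set \<Rightarrow> bool" where
  "is_fan \<Sigma> \<longleftrightarrow> finite \<Sigma> \<and> \<Sigma> \<noteq> {} \<and>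
     (\<forall>\<sigma>\<in>\<Sigma>. rational_cone \<sigma> \<and> strongly_convex \<sigma>) \<and>
     (\<forall>\<sigma>\<in>\<Sigma>. \<forall>\<tau>. \<tau> face_of \<sigma> \<and> \<tau> \<noteq> {} \<longrightarrow> \<tau> \<in> \<Sigma>) \<and>
     (\<forall>\<sigma>\<in>\<Sigma>. \<forall>\<tau>\<in>\<Sigma>. (\<sigma> \<inter> \<tau>) face_of \<sigma> \<and> (\<sigma> \<inter> \<tau>) face_of \<tau>)"

definition complete_fan :: "(real^'n) set set \<Rightarrow> bool" where
  "complete_fan \<Sigma> \<longleftrightarrow> is_fan \<Sigma> \<and> \<Union>\<Sigma> = UNIV"

definition rays :: "(real^'n) set set \<Rightarrow> (real^'n) set set" where
  "rays \<Sigma> = {\<rho>\<in>\<Sigma>. aff_dim \<rho> = 1}"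

definition cone_rays :: "(real^'n) set set \<Rightarrow> (real^'n) set \<Rightarrow> (real^'n) set set" where
  "cone_rays \<Sigma> \<sigma> = {\<rho>\<in>rays \<Sigma>. \<rho> \<subseteq> \<sigma>}"

definition prim_gen :: "(real^'n) set \<Rightarrow> real^'n" where
  "prim_gen \<rho> = (THE u. u \<in> \<rho> \<and> u \<in> lattice \<and> u \<noteq> 0 \<and>
                        (\<forall>v\<in>\<rho> \<inter> lattice. \<exists>k::nat. v = real k *\<^sub>R u))"

definition primitive_collection :: "(real^'n) set set \<Rightarrow> (real^'n) set set \<Rightarrow> bool" where
  "primitive_collection \<Sigma> C \<longleftrightarrow> C \<subseteq> rays \<Sigma> \<and>
     (\<forall>\<sigma>\<in>\<Sigma>. \<not> C \<subseteq> cone_rays \<Sigma> \<sigma>) \<and>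
     (\<forall>C'. C' \<subset> C \<longrightarrow> (\<exists>\<sigma>\<in>\<Sigma>. C' \<subseteq> cone_rays \<Sigma> \<sigma>))"

definition amply_equivalent ::
  "(real^'n) set set \<Rightarrow> (real^'n) set set \<Rightarrow> ((real^'n) set \<Rightarrow> (real^'n) set) \<Rightarrow> bool" where
  "amply_equivalent \<Sigma>1 \<Sigma>2 \<Psi> \<longleftrightarrow>
     complete_fan \<Sigma>1 \<and> complete_fan \<Sigma>2 \<and>
     bij_betw \<Psi> (rays \<Sigma>1) (rays \<Sigma>2) \<and>
     (\<forall>C. C \<subseteq> rays \<Sigma>1 \<longrightarrow>
          (primitive_collection \<Sigma>1 C \<longleftrightarrow> primitive_collection \<Sigma>2 (\<Psi> ` C))) \<and>
     (\<forall>a :: (real^'n) set \<Rightarrow> int.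
        (\<Sum>\<rho>\<in>rays \<Sigma>1. of_int (a \<rho>) *\<^sub>R prim_gen \<rho>) = 0 \<longleftrightarrow>
        (\<Sum>\<rho>\<in>rays \<Sigma>1. of_int (a \<rho>) *\<^sub>R prim_gen (\<Psi> \<rho>)) = 0)"

text \<open>Torus-invariant Q-divisors \<Sum> a_\<rho> D_\<rho>, as coefficient functions supported on \<Sigma>(1).\<close>
definition Qdiv :: "(real^'n) set set \<Rightarrow> ((real^'n) set \<Rightarrow> real) \<Rightarrow> bool" where
  "Qdiv \<Sigma> a \<longleftrightarrow> (\<forall>\<rho>. a \<rho> \<in> \<rat>) \<and> (\<forall>\<rho>. \<rho> \<notin> rays \<Sigma> \<longrightarrow> a \<rho> = 0)"

text \<open>div(\<chi>^m) = \<Sum> <m,u_\<rho>> D_\<rho>, m \<in> M_Q\<close>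
definition principal :: "(real^'n) set set \<Rightarrow> ((real^'n) set \<Rightarrow> real) \<Rightarrow> bool" where
  "principal \<Sigma> d \<longleftrightarrow> (\<exists>m::real^'n. (\<forall>i. m $ i \<in> \<rat>) \<and>
       (\<forall>\<rho>\<in>rays \<Sigma>. d \<rho> = inner m (prim_gen \<rho>)))"

definition cls :: "(real^'n) set set \<Rightarrow> ((real^'n) set \<Rightarrow> real) \<Rightarrow> ((real^'n) set \<Rightarrow> real) set" where
  "cls \<Sigma> a = {b. Qdiv \<Sigma> b \<and> principal \<Sigma> (\<lambda>\<rho>. b \<rho> - a \<rho>)}"

definition ClQ :: "(real^'n) set set \<Rightarrow> ((real^'n) set \<Rightarrow> real) set set" where
  "ClQ \<Sigma> = cls \<Sigma> ` {a. Qdiv \<Sigma> a}"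

text \<open>integral torus-invariant Cartier divisors: local data m_\<sigma> \<in> M with <m_\<sigma>,u_\<rho>> = -a_\<rho>\<close>
definition cartier :: "(real^'n) set set \<Rightarrow> ((real^'n) set \<Rightarrow> real) \<Rightarrow> bool" where
  "cartier \<Sigma> D \<longleftrightarrow> (\<forall>\<rho>. D \<rho> \<in> \<int>) \<and> (\<forall>\<rho>. \<rho> \<notin> rays \<Sigma> \<longrightarrow> D \<rho> = 0) \<and>
     (\<forall>\<sigma>\<in>\<Sigma>. \<exists>m\<in>lattice. \<forall>\<rho>\<in>cone_rays \<Sigma> \<sigma>. inner m (prim_gen \<rho>) = - D \<rho>)"

text \<open>ampleness of a Cartier divisor on a complete toric variety (strict convexity of the
  support function): for each maximal cone \<sigma>, <m_\<sigma>,u_\<rho>> > -a_\<rho> for \<rho> \<notin> \<sigma>(1).\<close>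
definition ample :: "(real^'n) set set \<Rightarrow> ((real^'n) set \<Rightarrow> real) \<Rightarrow> bool" where
  "ample \<Sigma> D \<longleftrightarrow> (\<forall>\<sigma>\<in>\<Sigma>. aff_dim \<sigma> = int CARD('n) \<longrightarrow>
     (\<exists>m\<in>lattice. \<forall>\<rho>\<in>rays \<Sigma>.
        (\<rho> \<subseteq> \<sigma> \<longrightarrow> inner m (prim_gen \<rho>) = - D \<rho>) \<and>
        (\<not> \<rho> \<subseteq> \<sigma> \<longrightarrow> inner m (prim_gen \<rho>) > - D \<rho>)))"

text \<open>Pic(X)_Q = image of Pic(X) \<otimes> Q in Cl(X)_Q\<close>
definition PicQ :: "(real^'n) set set \<Rightarrow> ((real^'n) set \<Rightarrow> real) set set" where
  "PicQ \<Sigma> = {cls \<Sigma> (\<lambda>\<rho>. q * D \<rho>) | q D. q \<in> \<rat> \<and> cartier \<Sigma> D}"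

definition AmpQ :: "(real^'n) set set \<Rightarrow> ((real^'n) set \<Rightarrow> real) set set" where
  "AmpQ \<Sigma> = {cls \<Sigma> (\<lambda>\<rho>. q * D \<rho>) | q D. q \<in> \<rat> \<and> q > 0 \<and> cartier \<Sigma> D \<and> ample \<Sigma> D}"

definition pullback :: "(real^'n) set set \<Rightarrow> ((real^'n) set \<Rightarrow> (real^'n) set)
     \<Rightarrow> ((real^'n) set \<Rightarrow> real) \<Rightarrow> ((real^'n) set \<Rightarrow> real)" where
  "pullback \<Sigma>1 \<Psi> a = (\<lambda>\<rho>. if \<rho> \<in> rays \<Sigma>1 then a (\<Psi> \<rho>) else 0)"

definition phi_star :: "(real^'n) set set \<Rightarrow> ((real^'n) set \<Rightarrow> (real^'n) set)
     \<Rightarrow> ((real^'n) set \<Rightarrow> real) set \<Rightarrow> ((real^'n) set \<Rightarrow> real) set" where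
  "phi_star \<Sigma>1 \<Psi> c = pullback \<Sigma>1 \<Psi> ` c"

end

theory Submission
  imports Defs
begin

text \<open>Since \<open>\<Psi>\<close> preserves the integer relations among primitive generators, there exist an
  integer matrix \<open>M\<close> and \<open>k > 0\<close> with \<open>M *v prim_gen \<rho> = k *\<^sub>R prim_gen (\<Psi> \<rho>)\<close>.
  Pairing with \<open>transpose M *v m\<close> turns a linear function \<open>m\<close> on the second fan into one on the
  first, up to the factor \<open>k\<close>: principal divisors pull back to principal divisors, and local
  data of a Cartier divisor pull back to local data of \<open>k\<close> times its pullback. A set of rays lies
  in a common cone iff it contains no primitive collection, so \<open>\<Psi>\<close> matches cones with cones,
  and each maximal cone with a maximal cone having the corresponding rays; this transports the
  strict inequalities defining ampleness. The same argument for the inverse bijection yields the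
  inverse map on classes.\<close>

section \<open>Rays and their primitive generators\<close>

definition half_line :: "'a::real_vector \<Rightarrow> 'a set" where
  "half_line v = {t *\<^sub>R v |t. t \<ge> 0}"

lemma half_line_scaleR:
  assumes "c > 0"
  shows "half_line (c *\<^sub>R v) = half_line v"
proof -
  have "t *\<^sub>R (c *\<^sub>R v) = (t * c) *\<^sub>R v" "t *\<^sub>R v = (t / c) *\<^sub>R (c *\<^sub>R v)" for t
    using assms by simp_all
  then show ?thesis
    using assms unfolding half_line_def by (metis (opaque_lifting) divide_nonneg_pos
      less_imp_le mult_nonneg_nonneg)
qed

lemma half_line_self: "v \<in> half_line v"
  unfolding half_line_def by (metis (mono_tags) mem_Collect_eq scaleR_one zero_le_one)

lemma lattice_diff: "x \<in> lattice \<Longrightarrow> y \<in> lattice \<Longrightarrow> x - y \<in> lattice"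
  by (auto simp: lattice_def)

lemma lattice_scaleR_Ints: "x \<in> lattice \<Longrightarrow> c \<in> \<int> \<Longrightarrow> c *\<^sub>R x \<in> lattice"
  by (auto simp: lattice_def)

lemma least_positive_lattice_multiple:
  fixes v :: "real^'n"
  assumes v: "v \<in> lattice" "v \<noteq> 0"
  obtains t0 where "t0 > 0" "t0 *\<^sub>R v \<in> lattice"
    "\<And>t. t > 0 \<Longrightarrow> t *\<^sub>R v \<in> lattice \<Longrightarrow> t0 \<le> t"
proof -
  obtain i where vi: "v $ i \<noteq> 0" using v(2) by (metis vec_eq_iff zero_index)
  obtain z where "v $ i = of_int z" using v(1) by (auto simp: lattice_def elim!: Ints_cases)
  then obtain a :: nat where a: "real a = \<bar>v $ i\<bar>" by (metis of_int_abs of_nat_nat abs_ge_zero)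
  have a0: "a > 0" using vi a by simp
  define K where "K = {k::nat. k > 0 \<and> (real k / a) *\<^sub>R v \<in> lattice}"
  have "a \<in> K" using a0 v(1) by (simp add: K_def)
  define k0 where "k0 = (LEAST k. k \<in> K)"
  have k0: "k0 \<in> K" "\<And>k. k \<in> K \<Longrightarrow> k0 \<le> k"
    unfolding k0_def using \<open>a \<in> K\<close> by (auto intro: LeastI Least_le)
  have "real k0 / a \<le> t" if t: "t > 0" "t *\<^sub>R v \<in> lattice" for t
  proof -
    have "t * v $ i \<in> \<int>" using t(2) by (auto simp: lattice_def)
    then have "t * a \<in> \<int>" using t(1) a by (metis Ints_abs abs_mult abs_of_pos)
    then obtain m where m: "t * a = of_int m" by (auto elim: Ints_cases)
    have "t * a > 0" using t(1) a0 by simp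
    then have "t = real (nat m) / a" "nat m > 0" using m a0 by (simp_all add: field_simps)
    then have "nat m \<in> K" using t(2) by (simp add: K_def)
    then show ?thesis using k0(2) \<open>t = real (nat m) / a\<close> a0 by (simp add: divide_right_mono)
  qed
  moreover have "real k0 / a > 0" "(real k0 / a) *\<^sub>R v \<in> lattice"
    using k0(1) a0 by (simp_all add: K_def)
  ultimately show thesis using that by blast
qed

text \<open>Division with remainder by the least positive lattice multiple \<open>t0 v\<close> shows that every
  lattice point of the half line is a natural multiple of \<open>t0 v\<close>.\<close>
lemma primitive_vector_exists:
  fixes v :: "real^'n"
  assumes v: "v \<in> lattice" "v \<noteq> 0"
  shows "\<exists>u. u \<in> half_line v \<and> u \<in> lattice \<and> u \<noteq> 0 \<and>
            (\<forall>w\<in>half_line v \<inter> lattice. \<exists>k::nat. w = real k *\<^sub>R u)"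
proof -
  obtain t0 where t0: "t0 > 0" "t0 *\<^sub>R v \<in> lattice"
    and least: "\<And>t. t > 0 \<Longrightarrow> t *\<^sub>R v \<in> lattice \<Longrightarrow> t0 \<le> t"
    using least_positive_lattice_multiple[OF v] by blast
  define u where "u = t0 *\<^sub>R v"
  show ?thesis
  proof (intro exI[of _ u] conjI ballI)
    show "u \<in> half_line v" "u \<in> lattice" "u \<noteq> 0"
      using t0 v(2) by (auto simp: u_def half_line_def)
    fix w assume "w \<in> half_line v \<inter> lattice"
    then obtain t where t: "t \<ge> 0" "w = t *\<^sub>R v" "w \<in> lattice" by (auto simp: half_line_def)
    define q where "q = nat \<lfloor>t / t0\<rfloor>"
    define r where "r = t - real q * t0"
    have "real q \<le> t / t0" "t / t0 < real q + 1"
      using t(1) t0 by (auto simp: q_def)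
    then have r: "0 \<le> r" "r < t0"
      using t0 by (auto simp: r_def field_simps)
    have "r *\<^sub>R v = w - real q *\<^sub>R u"
      by (simp add: r_def t u_def algebra_simps)
    moreover have "u \<in> lattice" using t0(2) by (simp add: u_def)
    ultimately have "r *\<^sub>R v \<in> lattice"
      using lattice_diff[OF t(3) lattice_scaleR_Ints] by simp
    then have "r = 0" using least[of r] r by fastforce
    then show "\<exists>k::nat. w = real k *\<^sub>R u" using r_def t by (auto simp: u_def)
  qed
qed

lemma aff_dim_eq_dim_of_0:
  fixes S :: "'a::euclidean_space set"
  assumes "0 \<in> S"
  shows "aff_dim S = int (dim S)"
  using aff_dim_eq_dim[of 0 S] assms hull_inc[of 0 S] by simp

lemma full_aff_dim_iff_span_UNIV:
  fixes S :: "(real^'n) set"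
  assumes "0 \<in> S"
  shows "aff_dim S = int CARD('n) \<longleftrightarrow> span S = UNIV"
  using aff_dim_eq_full[of S] affine_hull_span_0[OF hull_inc[OF assms]] by simp

lemma fan_cone_convex_cone: "is_fan \<Sigma> \<Longrightarrow> \<sigma> \<in> \<Sigma> \<Longrightarrow> convex_cone \<sigma>"
  by (auto simp: is_fan_def rational_cone_def convex_cone_convex_cone_hull)

lemma fan_cone_polyhedron: "is_fan \<Sigma> \<Longrightarrow> \<sigma> \<in> \<Sigma> \<Longrightarrow> polyhedron \<sigma>"
  by (auto simp: is_fan_def rational_cone_def polyhedron_convex_cone_hull)

lemma fan_cone_pointed: "is_fan \<Sigma> \<Longrightarrow> \<sigma> \<in> \<Sigma> \<Longrightarrow> x \<in> \<sigma> \<Longrightarrow> - x \<in> \<sigma> \<Longrightarrow> x = 0"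
  unfolding is_fan_def strongly_convex_def by (metis IntI image_eqI minus_minus singletonD)

lemma fan_cone_contains_0: "is_fan \<Sigma> \<Longrightarrow> \<sigma> \<in> \<Sigma> \<Longrightarrow> 0 \<in> \<sigma>"
  by (simp add: convex_cone_contains_0 fan_cone_convex_cone)

lemma finite_rays: "is_fan \<Sigma> \<Longrightarrow> finite (rays \<Sigma>)"
  by (auto simp: is_fan_def rays_def)

lemma pointed_cone_dim_1_eq_half_line:
  fixes \<rho> :: "'a::euclidean_space set"
  assumes cc: "convex_cone \<rho>" and pointed: "\<And>x. x \<in> \<rho> \<Longrightarrow> - x \<in> \<rho> \<Longrightarrow> x = 0"
    and dim: "dim \<rho> = 1" and v: "v \<in> \<rho>" "v \<noteq> 0"
  shows "\<rho> = half_line v"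
proof
  have span_v: "span \<rho> = span {v}"
    by (rule dim_eq_span[symmetric]) (use v dim in auto)
  show "\<rho> \<subseteq> half_line v"
  proof
    fix y assume y: "y \<in> \<rho>"
    then obtain c where c: "y = c *\<^sub>R v"
      using span_base[OF y] span_v by (auto simp: span_singleton)
    have "c \<ge> 0"
    proof (rule ccontr)
      assume "\<not> c \<ge> 0"
      then have "- v = (- 1 / c) *\<^sub>R y" using c by simp
      also have "\<dots> \<in> \<rho>"
        using convex_cone_scaleR[OF cc _ y, of "- 1 / c"] \<open>\<not> c \<ge> 0\<close> by simp
      finally show False using pointed[OF v(1)] v(2) by simp
    qed
    then show "y \<in> half_line v" using c by (auto simp: half_line_def)
  qed
  show "half_line v \<subseteq> \<rho>"
    using v(1) cc by (auto simp: half_line_def convex_cone_scaleR)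
qed

lemma ray_eq_half_line:
  assumes fan: "is_fan \<Sigma>" and \<rho>: "\<rho> \<in> rays \<Sigma>"
  obtains v where "v \<in> lattice" "v \<noteq> 0" "\<rho> = half_line v"
proof -
  have \<rho>\<Sigma>: "\<rho> \<in> \<Sigma>" and "aff_dim \<rho> = 1" using \<rho> by (auto simp: rays_def)
  then have dim: "dim \<rho> = 1" using aff_dim_eq_dim_of_0[OF fan_cone_contains_0[OF fan]] by simp
  have "rational_cone \<rho>" using fan \<rho>\<Sigma> by (simp add: is_fan_def)
  then obtain S where S: "S \<subseteq> lattice" "\<rho> = convex_cone hull S"
    unfolding rational_cone_def by blast
  have "\<not> S \<subseteq> {0}"
  proof
    assume "S \<subseteq> {0}"
    then have "\<rho> \<subseteq> {0}" using S(2) by (simp add: hull_minimal)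
    then have "dim \<rho> = 0" by simp
    then show False using dim by simp
  qed
  then obtain v where v: "v \<in> S" "v \<noteq> 0" by blast
  have "v \<in> \<rho>" unfolding S(2) by (rule hull_inc[OF v(1)])
  then have "\<rho> = half_line v"
    using fan_cone_convex_cone[OF fan \<rho>\<Sigma>] fan_cone_pointed[OF fan \<rho>\<Sigma>] dim v(2)
    by (intro pointed_cone_dim_1_eq_half_line)
  then show thesis using that v S(1) by blast
qed

lemma
  assumes "is_fan \<Sigma>" and "\<rho> \<in> rays \<Sigma>"
  shows prim_gen_in_lattice: "prim_gen \<rho> \<in> lattice"
    and ray_eq_half_line_prim_gen: "\<rho> = half_line (prim_gen \<rho>)"
proof -
  obtain v where v: "v \<in> lattice" "v \<noteq> 0" "\<rho> = half_line v"
    using ray_eq_half_line[OF assms] .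
  let ?P = "\<lambda>u. u \<in> \<rho> \<and> u \<in> lattice \<and> u \<noteq> 0 \<and> (\<forall>w\<in>\<rho> \<inter> lattice. \<exists>k::nat. w = real k *\<^sub>R u)"
  obtain u where u: "?P u" using primitive_vector_exists[OF v(1,2)] v(3) by blast
  have unique: "w = u" if w: "?P w" for w
  proof -
    obtain a :: nat where a: "w = real a *\<^sub>R u" using u w by blast
    obtain b :: nat where "u = real b *\<^sub>R w" using u w by blast
    then have "(real b * real a - 1) *\<^sub>R u = 0" by (simp add: a algebra_simps)
    then have "real b * real a = 1" using u by simp
    then have "a = 1" by (metis of_nat_1 of_nat_eq_iff of_nat_mult nat_mult_eq_1_iff)
    then show ?thesis using a by simp
  qed
  have "prim_gen \<rho> = u" unfolding prim_gen_def by (rule the_equality[where P = ?P, OF u unique])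
  with u show "prim_gen \<rho> \<in> lattice" by simp
  obtain c where "c \<ge> 0" "u = c *\<^sub>R v" using u v(3) by (auto simp: half_line_def)
  with u have "c > 0" "u = c *\<^sub>R v" by auto
  then show "\<rho> = half_line (prim_gen \<rho>)"
    using \<open>prim_gen \<rho> = u\<close> v(3) half_line_scaleR[of c v] by simp
qed

lemma prim_gen_in_ray: "is_fan \<Sigma> \<Longrightarrow> \<rho> \<in> rays \<Sigma> \<Longrightarrow> prim_gen \<rho> \<in> \<rho>"
  using half_line_self ray_eq_half_line_prim_gen by metis

section \<open>Cones of a fan are spanned by their rays\<close>

lemma convex_cone_escapes_along:
  fixes \<sigma> :: "'a::euclidean_space set"
  assumes "closed \<sigma>" "convex_cone \<sigma>" "x \<in> \<sigma>" "d \<notin> \<sigma>"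
  shows "\<exists>t>0. x + t *\<^sub>R d \<notin> \<sigma>"
proof (rule ccontr)
  assume "\<not> ?thesis"
  then have stays: "x + t *\<^sub>R d \<in> \<sigma>" if "t > 0" for t using that by blast
  define f where "f n = inverse (real (Suc n)) *\<^sub>R x + d" for n
  have "f n = inverse (real (Suc n)) *\<^sub>R (x + real (Suc n) *\<^sub>R d)" for n
    by (simp add: f_def scaleR_add_right)
  then have "f n \<in> \<sigma>" for n
    using assms(2) stays[of "real (Suc n)"] by (simp add: convex_cone_scaleR)
  moreover have "f \<longlonglongrightarrow> 0 *\<^sub>R x + d"
    unfolding f_def by (intro tendsto_intros LIMSEQ_inverse_real_of_nat)
  then have "f \<longlonglongrightarrow> d" by simp
  ultimately have "d \<in> \<sigma>" using closed_sequentially[OF assms(1)] by blast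
  then show False using assms(4) by simp
qed

lemma rel_interior_extends_along:
  fixes \<sigma> :: "'a::euclidean_space set"
  assumes "0 \<in> \<sigma>" "y \<in> rel_interior \<sigma>" "d \<in> span \<sigma>"
  obtains e where "e > 0" "\<And>\<delta>. 0 \<le> \<delta> \<Longrightarrow> \<delta> < e \<Longrightarrow> y + \<delta> *\<^sub>R d \<in> \<sigma>"
proof -
  obtain e0 where e0: "e0 > 0" "ball y e0 \<inter> span \<sigma> \<subseteq> \<sigma>" "y \<in> \<sigma>"
    using assms(2) affine_hull_span_0[OF hull_inc[OF assms(1)]]
    unfolding mem_rel_interior_ball by metis
  have pos: "norm d + 1 > 0" by (simp add: add_nonneg_pos)
  have "y + \<delta> *\<^sub>R d \<in> \<sigma>" if "0 \<le> \<delta>" "\<delta> < e0 / (norm d + 1)" for \<delta>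
  proof -
    have "\<delta> * norm d \<le> \<delta> * (norm d + 1)" using that(1) by (simp add: mult_left_mono)
    also have "\<dots> < e0" using that(2) by (simp add: pos_less_divide_eq[OF pos])
    finally have "y + \<delta> *\<^sub>R d \<in> ball y e0" using that(1) by (simp add: dist_norm)
    moreover have "y + \<delta> *\<^sub>R d \<in> span \<sigma>"
      using span_base[OF e0(3)] assms(3) by (intro span_add span_mul)
    ultimately show ?thesis using e0(2) by blast
  qed
  moreover have "e0 / (norm d + 1) > 0" using e0(1) pos by simp
  ultimately show thesis using that by blast
qed

lemma convex_cone_ray_meets_rel_boundary:
  fixes \<sigma> :: "'a::euclidean_space set"
  assumes cl: "closed \<sigma>" and cc: "convex_cone \<sigma>" and x: "x \<in> \<sigma>"
    and d: "d \<in> span \<sigma>" "d \<notin> \<sigma>"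
  obtains t where "t \<ge> 0" "x + t *\<^sub>R d \<in> \<sigma> - rel_interior \<sigma>"
proof -
  obtain t0 where t0: "t0 > 0" "x + t0 *\<^sub>R d \<notin> \<sigma>"
    using convex_cone_escapes_along[OF cl cc x d(2)] by blast
  define I where "I = {0..t0} \<inter> (\<lambda>t. x + t *\<^sub>R d) -` \<sigma>"
  have "closed ((\<lambda>t. x + t *\<^sub>R d) -` \<sigma>)"
    by (rule continuous_closed_vimage[OF cl]) (intro continuous_intros)
  then have "compact I" unfolding I_def by (intro compact_Int_closed) auto
  moreover have "0 \<in> I" using x t0 by (simp add: I_def)
  ultimately obtain T where T: "T \<in> I" "\<And>s. s \<in> I \<Longrightarrow> s \<le> T"
    by (metis compact_attains_sup empty_iff)
  have T_le: "0 \<le> T" "T \<le> t0" and T\<sigma>: "x + T *\<^sub>R d \<in> \<sigma>"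
    using T(1) by (simp_all add: I_def)
  have "T < t0" using T_le T\<sigma> t0(2) by (cases "T = t0") auto
  have "x + T *\<^sub>R d \<notin> rel_interior \<sigma>"
  proof
    assume "x + T *\<^sub>R d \<in> rel_interior \<sigma>"
    then obtain e where e: "e > 0" "\<And>\<delta>. 0 \<le> \<delta> \<Longrightarrow> \<delta> < e \<Longrightarrow> x + T *\<^sub>R d + \<delta> *\<^sub>R d \<in> \<sigma>"
      using rel_interior_extends_along[OF convex_cone_contains_0[OF cc] _ d(1)] by blast
    define \<delta> where "\<delta> = min (e / 2) (t0 - T)"
    have \<delta>: "\<delta> > 0" "\<delta> < e" "T + \<delta> \<le> t0"
      using e(1) \<open>T < t0\<close> by (auto simp: \<delta>_def)
    then have "T + \<delta> \<in> I"
      using e(2)[of \<delta>] T_le by (simp add: I_def algebra_simps)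
    then show False using T(2) \<delta>(1) by fastforce
  qed
  then show thesis using that T_le T\<sigma> by blast
qed

text \<open>Leave the cone from \<open>x\<close> in a direction \<open>u\<close> off the line through \<open>x\<close>, reaching the
  boundary point \<open>p\<close>; then leave it from \<open>x\<close> in direction \<open>-p\<close>, reaching \<open>q\<close>. Then \<open>x\<close> lies in
  the span of \<open>p\<close> and \<open>q\<close>.\<close>
lemma pointed_cone_subset_span_rel_boundary:
  fixes \<sigma> :: "'a::euclidean_space set"
  assumes cl: "closed \<sigma>" and cc: "convex_cone \<sigma>"
    and pointed: "\<And>x. x \<in> \<sigma> \<Longrightarrow> - x \<in> \<sigma> \<Longrightarrow> x = 0" and dim: "dim \<sigma> \<ge> 2"
  shows "\<sigma> \<subseteq> span (\<sigma> - rel_interior \<sigma>)"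
proof
  fix x assume x: "x \<in> \<sigma>"
  show "x \<in> span (\<sigma> - rel_interior \<sigma>)"
  proof (cases "x = 0")
    case False
    have "\<not> span \<sigma> \<subseteq> span {x}"
    proof
      assume "span \<sigma> \<subseteq> span {x}"
      then have "dim \<sigma> \<le> dim {x}" by (meson dim_mono span_superset subset_trans)
      then show False using dim by (simp split: if_splits)
    qed
    then obtain w where w: "w \<in> span \<sigma>" "w \<notin> span {x}" by blast
    define u where "u = (if w \<in> \<sigma> then - w else w)"
    have u: "u \<in> span \<sigma>" "u \<notin> span {x}" "u \<notin> \<sigma>"
      using w pointed[of w] span_neg[of "- w" "{x}"] span_zero[of "{x}"]
      by (auto simp: u_def span_neg)
    obtain t1 where t1: "t1 \<ge> 0" "x + t1 *\<^sub>R u \<in> \<sigma> - rel_interior \<sigma>"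
      using convex_cone_ray_meets_rel_boundary[OF cl cc x u(1,3)] .
    define p where "p = x + t1 *\<^sub>R u"
    have "p \<noteq> 0"
    proof
      assume "p = 0"
      then have "u = (- inverse t1) *\<^sub>R x" "t1 \<noteq> 0"
        using False by (auto simp: p_def add_eq_0_iff2)
      then show False using u(2) span_mul[OF span_base[of x "{x}"], of "- inverse t1"] by simp
    qed
    moreover have "p \<in> \<sigma>" using t1(2) by (simp add: p_def)
    ultimately have "- p \<notin> \<sigma>" "- p \<in> span \<sigma>"
      using pointed[of p] by (auto intro: span_neg span_base)
    then obtain t2 where t2: "t2 \<ge> 0" "x + t2 *\<^sub>R (- p) \<in> \<sigma> - rel_interior \<sigma>"
      using convex_cone_ray_meets_rel_boundary[OF cl cc x] by blast
    have "x = (x + t2 *\<^sub>R (- p)) + t2 *\<^sub>R p" by simp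
    also have "\<dots> \<in> span (\<sigma> - rel_interior \<sigma>)"
      using t1 t2 by (intro span_add span_mul span_base) (auto simp: p_def)
    finally show ?thesis .
  qed (simp add: span_zero)
qed

text \<open>Induction on the dimension: a cone of dimension at least two is spanned by its relative
  boundary, the union of its facets, which are lower-dimensional cones of the fan.\<close>
lemma fan_cone_subset_span_prim_gens:
  assumes fan: "is_fan \<Sigma>" and "\<sigma> \<in> \<Sigma>"
  shows "\<sigma> \<subseteq> span (prim_gen ` cone_rays \<Sigma> \<sigma>)"
  using assms(2)
proof (induction "dim \<sigma>" arbitrary: \<sigma> rule: less_induct)
  case less
  have dim_eq: "aff_dim \<tau> = int (dim \<tau>)" if "\<tau> \<in> \<Sigma>" for \<tau>
    using aff_dim_eq_dim_of_0[OF fan_cone_contains_0[OF fan that]] .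
  consider "dim \<sigma> = 0" | "dim \<sigma> = 1" | "dim \<sigma> \<ge> 2" by linarith
  then show ?case
  proof cases
    case 1
    then show ?thesis using span_zero by fastforce
  next
    case 2
    then have "\<sigma> \<in> cone_rays \<Sigma> \<sigma>" using less.prems dim_eq by (simp add: cone_rays_def rays_def)
    then have "span {prim_gen \<sigma>} \<subseteq> span (prim_gen ` cone_rays \<Sigma> \<sigma>)"
      by (intro span_mono) auto
    moreover have "\<sigma> \<subseteq> span {prim_gen \<sigma>}"
      using ray_eq_half_line_prim_gen[OF fan, of \<sigma>] \<open>\<sigma> \<in> cone_rays \<Sigma> \<sigma>\<close>
      by (auto simp: cone_rays_def half_line_def span_singleton)
    ultimately show ?thesis by blast
  next
    case 3
    have "F \<subseteq> span (prim_gen ` cone_rays \<Sigma> \<sigma>)" if F: "F facet_of \<sigma>" for F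
    proof -
      have "F \<in> \<Sigma>" using fan less.prems F by (auto simp: is_fan_def facet_of_def)
      moreover have "dim F < dim \<sigma>"
        using F dim_eq[OF \<open>F \<in> \<Sigma>\<close>] dim_eq[OF less.prems] by (simp add: facet_of_def)
      ultimately have "F \<subseteq> span (prim_gen ` cone_rays \<Sigma> F)" using less.hyps by blast
      moreover have "cone_rays \<Sigma> F \<subseteq> cone_rays \<Sigma> \<sigma>"
        using facet_of_imp_subset[OF F] by (auto simp: cone_rays_def)
      ultimately show ?thesis by (meson image_mono span_mono subset_trans)
    qed
    then have "\<sigma> - rel_interior \<sigma> \<subseteq> span (prim_gen ` cone_rays \<Sigma> \<sigma>)"
      using rel_boundary_of_polyhedron[OF fan_cone_polyhedron[OF fan less.prems]] by blast
    then have "span (\<sigma> - rel_interior \<sigma>) \<subseteq> span (prim_gen ` cone_rays \<Sigma> \<sigma>)"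
      by (metis span_mono span_span)
    moreover have "\<sigma> \<subseteq> span (\<sigma> - rel_interior \<sigma>)"
      using fan less.prems 3 by (intro pointed_cone_subset_span_rel_boundary)
        (auto intro: polyhedron_imp_closed fan_cone_polyhedron fan_cone_convex_cone
          fan_cone_pointed)
    ultimately show ?thesis by blast
  qed
qed

lemma prim_gen_in_cone: "is_fan \<Sigma> \<Longrightarrow> \<rho> \<in> cone_rays \<Sigma> \<sigma> \<Longrightarrow> prim_gen \<rho> \<in> \<sigma>"
  using prim_gen_in_ray by (fastforce simp: cone_rays_def)

lemma complete_fan_span_prim_gens:
  assumes "complete_fan \<Sigma>"
  shows "span (prim_gen ` rays \<Sigma>) = UNIV"
proof -
  have "x \<in> span (prim_gen ` rays \<Sigma>)" for x
  proof -
    obtain \<sigma> where "\<sigma> \<in> \<Sigma>" "x \<in> \<sigma>" using assms by (auto simp: complete_fan_def)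
    then have "x \<in> span (prim_gen ` cone_rays \<Sigma> \<sigma>)"
      using assms fan_cone_subset_span_prim_gens by (auto simp: complete_fan_def)
    moreover have "span (prim_gen ` cone_rays \<Sigma> \<sigma>) \<subseteq> span (prim_gen ` rays \<Sigma>)"
      by (intro span_mono image_mono) (auto simp: cone_rays_def)
    ultimately show ?thesis by blast
  qed
  then show ?thesis by blast
qed

lemma full_dim_cone_span_prim_gens:
  fixes \<Sigma> :: "(real^'n) set set"
  assumes fan: "is_fan \<Sigma>" and \<sigma>: "\<sigma> \<in> \<Sigma>" "aff_dim \<sigma> = int CARD('n)"
  shows "span (prim_gen ` cone_rays \<Sigma> \<sigma>) = UNIV"
proof -
  have "span \<sigma> = UNIV"
    using \<sigma> full_aff_dim_iff_span_UNIV[OF fan_cone_contains_0[OF fan \<sigma>(1)]] by simp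
  moreover have "span \<sigma> \<subseteq> span (prim_gen ` cone_rays \<Sigma> \<sigma>)"
    using fan_cone_subset_span_prim_gens[OF fan \<sigma>(1)] by (metis span_mono span_span)
  ultimately show ?thesis by blast
qed

text \<open>The common face \<open>\<sigma> \<inter> \<tau>\<close> contains the generators of \<open>\<sigma>\<close>, so it is full-dimensional;
  a full-dimensional face of a cone is the cone itself.\<close>
lemma full_dim_cone_eqI:
  fixes \<Sigma> :: "(real^'n) set set"
  assumes fan: "is_fan \<Sigma>" and \<sigma>: "\<sigma> \<in> \<Sigma>" "aff_dim \<sigma> = int CARD('n)"
    and \<tau>: "\<tau> \<in> \<Sigma>" and rays_sub: "cone_rays \<Sigma> \<sigma> \<subseteq> cone_rays \<Sigma> \<tau>"
  shows "\<sigma> = \<tau>"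
proof -
  have "prim_gen ` cone_rays \<Sigma> \<sigma> \<subseteq> \<sigma> \<inter> \<tau>"
    using rays_sub prim_gen_in_cone[OF fan] by blast
  then have "span (\<sigma> \<inter> \<tau>) = UNIV"
    using full_dim_cone_span_prim_gens[OF fan \<sigma>] by (metis span_mono top.extremum_uniqueI)
  then have full: "aff_dim (\<sigma> \<inter> \<tau>) = int CARD('n)"
    using full_aff_dim_iff_span_UNIV fan_cone_contains_0[OF fan] \<sigma>(1) \<tau> by blast
  have faces: "(\<sigma> \<inter> \<tau>) face_of \<sigma>" "(\<sigma> \<inter> \<tau>) face_of \<tau>"
    using fan \<sigma>(1) \<tau> by (auto simp: is_fan_def)
  have convex: "convex \<sigma>" "convex \<tau>"
    using fan \<sigma>(1) \<tau> by (auto intro: polyhedron_imp_convex fan_cone_polyhedron)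
  have "\<sigma> \<inter> \<tau> = \<sigma>"
    using face_of_aff_dim_lt[OF convex(1) faces(1)] full \<sigma>(2) by fastforce
  then have "\<sigma> face_of \<tau>" using faces(2) by simp
  then show ?thesis
    using face_of_aff_dim_lt[OF convex(2)] aff_dim_le_DIM[of \<tau>] \<sigma>(2) by fastforce
qed

section \<open>Integer matrices transporting integer relations\<close>

lemma rat_common_denominator:
  fixes A :: "rat set"
  assumes "finite A"
  shows "\<exists>D::int. D > 0 \<and> (\<forall>q\<in>A. of_int D * q \<in> \<int>)"
  using assms
proof (induction A rule: finite_induct)
  case empty
  show ?case by (intro exI[of _ 1]) simp
next
  case (insert q A)
  then obtain D where D: "D > 0" "\<forall>p\<in>A. of_int D * p \<in> \<int>" by blast
  obtain n d where nd: "quotient_of q = (n, d)" by (cases "quotient_of q")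
  then have "d > 0" "of_int d * q = of_int n"
    using quotient_of_denom_pos quotient_of_div[OF nd] by auto
  show ?case
  proof (intro exI[of _ "D * d"] conjI ballI)
    show "D * d > 0" using D(1) \<open>d > 0\<close> by simp
    fix p assume "p \<in> insert q A"
    moreover have "of_int (D * d) * q = of_int D * of_int n"
      using \<open>of_int d * q = of_int n\<close> by (metis mult.assoc of_int_mult)
    moreover have "of_int (D * d) * p = of_int d * (of_int D * p)" for p :: rat
      by simp
    ultimately show "of_int (D * d) * p \<in> \<int>"
      using D(2) by (metis Ints_mult Ints_of_int insert_iff)
  qed
qed

definition of_rat_vec :: "rat^'n \<Rightarrow> real^'n" where
  "of_rat_vec q = (\<chi> i. of_rat (q $ i))"

lemma of_rat_vec_add: "of_rat_vec (a + b) = of_rat_vec a + of_rat_vec b"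
  by (simp add: of_rat_vec_def vec_eq_iff of_rat_add)

lemma of_rat_vec_scale: "of_rat_vec (c *s a) = of_rat c *\<^sub>R of_rat_vec a"
  by (simp add: of_rat_vec_def vec_eq_iff of_rat_mult)

lemma of_rat_vec_0 [simp]: "of_rat_vec 0 = 0"
  by (simp add: of_rat_vec_def vec_eq_iff)

lemma of_rat_vec_sum: "of_rat_vec (sum f S) = (\<Sum>x\<in>S. of_rat_vec (f x))"
  by (induction S rule: infinite_finite_induct) (auto simp: of_rat_vec_add)

lemma of_rat_vec_eq_0_iff [simp]: "of_rat_vec a = 0 \<longleftrightarrow> a = 0"
  by (simp add: of_rat_vec_def vec_eq_iff)

lemma lattice_subset_range_of_rat_vec: "lattice \<subseteq> range of_rat_vec"
proof
  fix x :: "real^'n" assume "x \<in> lattice"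
  then have "x = of_rat_vec (\<chi> i. of_int \<lfloor>x $ i\<rfloor>)"
    by (auto simp: of_rat_vec_def lattice_def vec_eq_iff elim!: Ints_cases)
  then show "x \<in> range of_rat_vec" by blast
qed

lemma independent_index_subset:
  fixes xq :: "'r \<Rightarrow> 'a::field^'n"
  obtains B where "B \<subseteq> R" "inj_on xq B" "vec.independent (xq ` B)" "xq ` R \<subseteq> vec.span (xq ` B)"
proof -
  obtain B' where B': "B' \<subseteq> xq ` R" "vec.independent B'" "xq ` R \<subseteq> vec.span B'"
    by (rule vec.maximal_independent_subset)
  have xq_inv: "xq (inv_into R xq b) = b" "inv_into R xq b \<in> R" if "b \<in> B'" for b
    using that B'(1) by (auto intro: f_inv_into_f inv_into_into)
  have "inv_into R xq ` B' \<subseteq> R" "inj_on xq (inv_into R xq ` B')" "xq ` inv_into R xq ` B' = B'"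
    by (auto simp: xq_inv inj_on_def image_image)
  with B' that show thesis by metis
qed

lemma linear_extension_respecting_relations:
  fixes xq yq :: "'r \<Rightarrow> 'a::field^'n"
  assumes fin: "finite R"
    and rel: "\<And>c. (\<Sum>\<rho>\<in>R. c \<rho> *s xq \<rho>) = 0 \<Longrightarrow> (\<Sum>\<rho>\<in>R. c \<rho> *s yq \<rho>) = 0"
  obtains g where "Vector_Spaces.linear (*s) (*s) g" "\<And>\<rho>. \<rho> \<in> R \<Longrightarrow> g (xq \<rho>) = yq \<rho>"
proof -
  obtain B where B: "B \<subseteq> R" "inj_on xq B" "vec.independent (xq ` B)"
    "xq ` R \<subseteq> vec.span (xq ` B)"
    by (rule independent_index_subset)
  obtain g where g: "Vector_Spaces.linear (*s) (*s) g" "\<And>\<rho>. \<rho> \<in> B \<Longrightarrow> g (xq \<rho>) = yq \<rho>"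
    using vec.linear_independent_extend[OF B(3), of "\<lambda>b. yq (inv_into B xq b)"] B(2)
    by (auto simp: inv_into_f_f)
  have "g (xq \<rho>) = yq \<rho>" if \<rho>: "\<rho> \<in> R" for \<rho>
  proof -
    have "finite (xq ` B)" using B(1) fin finite_subset by blast
    then obtain u where "xq \<rho> = (\<Sum>b\<in>xq ` B. u b *s b)"
      using B(4) \<rho> vec.span_finite by fastforce
    also have "\<dots> = (\<Sum>\<rho>'\<in>B. u (xq \<rho>') *s xq \<rho>')"
      using sum.reindex[OF B(2), of "\<lambda>b. u b *s b"] by simp
    finally have x_comb: "xq \<rho> = (\<Sum>\<rho>'\<in>B. u (xq \<rho>') *s xq \<rho>')" .
    define c where "c \<rho>' = (if \<rho>' = \<rho> then 1 else 0) - (if \<rho>' \<in> B then u (xq \<rho>') else 0)"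
      for \<rho>'
    have comb: "(\<Sum>\<rho>'\<in>R. c \<rho>' *s z \<rho>') = z \<rho> - (\<Sum>\<rho>'\<in>B. u (xq \<rho>') *s z \<rho>')"
      for z :: "'r \<Rightarrow> 'a^'n"
    proof -
      have "(\<Sum>\<rho>'\<in>R. (if \<rho>' \<in> B then u (xq \<rho>') else 0) *s z \<rho>') =
            (\<Sum>\<rho>'\<in>B. u (xq \<rho>') *s z \<rho>')"
        using fin B(1) by (simp add: sum.inter_restrict[symmetric] Int_absorb1
            if_distrib[of "\<lambda>a. a *s _"] cong: if_cong)
      moreover have "(\<Sum>\<rho>'\<in>R. (if \<rho>' = \<rho> then 1 else 0) *s z \<rho>') = z \<rho>"
        using fin \<rho> by (simp add: if_distrib[of "\<lambda>a. a *s _"] cong: if_cong)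
      ultimately show ?thesis
        by (simp add: c_def vec.scale_left_diff_distrib sum_subtractf)
    qed
    have "(\<Sum>\<rho>'\<in>R. c \<rho>' *s yq \<rho>') = 0"
      using rel[of c] comb[of xq] x_comb by simp
    then have "yq \<rho> = (\<Sum>\<rho>'\<in>B. u (xq \<rho>') *s g (xq \<rho>'))"
      using comb[of yq] g(2) by simp
    also have "\<dots> = g (xq \<rho>)"
      by (subst x_comb) (simp add: vec.linear_sum[OF g(1)] vec.linear_scale[OF g(1)])
    finally show ?thesis by simp
  qed
  with g(1) that show thesis by blast
qed

lemma int_relations_imp_rat_relations:
  fixes x y :: "'r \<Rightarrow> real^'n" and xq yq :: "'r \<Rightarrow> rat^'n"
  assumes fin: "finite R"
    and xq: "\<And>\<rho>. \<rho> \<in> R \<Longrightarrow> of_rat_vec (xq \<rho>) = x \<rho>"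
    and yq: "\<And>\<rho>. \<rho> \<in> R \<Longrightarrow> of_rat_vec (yq \<rho>) = y \<rho>"
    and rel: "\<And>a::'r \<Rightarrow> int. (\<Sum>\<rho>\<in>R. of_int (a \<rho>) *\<^sub>R x \<rho>) = 0 \<Longrightarrow>
                             (\<Sum>\<rho>\<in>R. of_int (a \<rho>) *\<^sub>R y \<rho>) = 0"
    and c: "(\<Sum>\<rho>\<in>R. c \<rho> *s xq \<rho>) = 0"
  shows "(\<Sum>\<rho>\<in>R. c \<rho> *s yq \<rho>) = 0"
proof -
  obtain D :: int where D: "D > 0" "\<forall>q\<in>c ` R. of_int D * q \<in> \<int>"
    using rat_common_denominator[of "c ` R"] fin by blast
  define a where "a \<rho> = \<lfloor>of_int D * c \<rho>\<rfloor>" for \<rho>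
  have a: "of_int (a \<rho>) = of_int D * c \<rho>" if "\<rho> \<in> R" for \<rho>
    using D(2) that by (auto simp: a_def elim!: Ints_cases)
  have cleared: "of_rat_vec (of_int D *s (\<Sum>\<rho>\<in>R. c \<rho> *s zq \<rho>)) =
      (\<Sum>\<rho>\<in>R. of_int (a \<rho>) *\<^sub>R z \<rho>)"
    if z: "\<And>\<rho>. \<rho> \<in> R \<Longrightarrow> of_rat_vec (zq \<rho>) = z \<rho>" for z zq
  proof -
    have "of_rat_vec (of_int D *s (\<Sum>\<rho>\<in>R. c \<rho> *s zq \<rho>)) =
        (\<Sum>\<rho>\<in>R. of_rat (of_int D * c \<rho>) *\<^sub>R of_rat_vec (zq \<rho>))"
      by (simp add: vec.scale_sum_right vector_smult_assoc of_rat_vec_sum of_rat_vec_scale)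
    also have "\<dots> = (\<Sum>\<rho>\<in>R. of_int (a \<rho>) *\<^sub>R z \<rho>)"
      by (intro sum.cong refl) (simp add: z a[symmetric] of_rat_of_int_eq)
    finally show ?thesis .
  qed
  have "(\<Sum>\<rho>\<in>R. of_int (a \<rho>) *\<^sub>R y \<rho>) = 0"
    using rel cleared[of xq x] xq c by simp
  then have "of_rat_vec (of_int D *s (\<Sum>\<rho>\<in>R. c \<rho> *s yq \<rho>)) = 0"
    using cleared[of yq y] yq by simp
  then show ?thesis using D(1) by (simp add: vec.scale_eq_0_iff)
qed

text \<open>The matrix is the rational linear map \<open>x \<rho> \<mapsto> y \<rho>\<close>, which exists because relations
  carry over, with denominators cleared.\<close>
lemma integer_matrix_transfer:
  fixes x y :: "'r \<Rightarrow> real^'n"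
  assumes fin: "finite R"
    and lattice: "\<And>\<rho>. \<rho> \<in> R \<Longrightarrow> x \<rho> \<in> lattice" "\<And>\<rho>. \<rho> \<in> R \<Longrightarrow> y \<rho> \<in> lattice"
    and rel: "\<And>a::'r \<Rightarrow> int. (\<Sum>\<rho>\<in>R. of_int (a \<rho>) *\<^sub>R x \<rho>) = 0 \<Longrightarrow>
                             (\<Sum>\<rho>\<in>R. of_int (a \<rho>) *\<^sub>R y \<rho>) = 0"
  obtains M :: "real^'n^'n" and k :: nat
  where "k > 0" "\<And>i j. M $ i $ j \<in> \<int>" "\<And>\<rho>. \<rho> \<in> R \<Longrightarrow> M *v x \<rho> = real k *\<^sub>R y \<rho>"
proof -
  have "\<forall>\<rho>\<in>R. \<exists>q. of_rat_vec q = x \<rho>" "\<forall>\<rho>\<in>R. \<exists>q. of_rat_vec q = y \<rho>"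
    using lattice lattice_subset_range_of_rat_vec by (metis rangeE subsetD)+
  then obtain xq yq where xq: "\<And>\<rho>. \<rho> \<in> R \<Longrightarrow> of_rat_vec (xq \<rho>) = x \<rho>"
    and yq: "\<And>\<rho>. \<rho> \<in> R \<Longrightarrow> of_rat_vec (yq \<rho>) = y \<rho>"
    by metis
  have "(\<Sum>\<rho>\<in>R. c \<rho> *s yq \<rho>) = 0" if "(\<Sum>\<rho>\<in>R. c \<rho> *s xq \<rho>) = 0" for c
    using fin xq yq rel that by (rule int_relations_imp_rat_relations)
  then obtain g where g: "Vector_Spaces.linear (*s) (*s) g" "\<And>\<rho>. \<rho> \<in> R \<Longrightarrow> g (xq \<rho>) = yq \<rho>"
    using linear_extension_respecting_relations[OF fin] by blast
  define G where "G = matrix g"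
  obtain D :: int where D: "D > 0" "\<forall>q\<in>range (\<lambda>(i, j). G $ i $ j). of_int D * q \<in> \<int>"
    using rat_common_denominator[of "range (\<lambda>(i, j). G $ i $ j)"] by auto
  define M :: "real^'n^'n" where "M = (\<chi> i j. of_rat (of_int D * G $ i $ j))"
  have "M $ i $ j \<in> \<int>" for i j
  proof -
    obtain z where "of_int D * G $ i $ j = of_int z" using D(2) by (auto elim!: Ints_cases)
    then show ?thesis by (simp add: M_def of_rat_of_int_eq)
  qed
  moreover have "M *v x \<rho> = real (nat D) *\<^sub>R y \<rho>" if \<rho>: "\<rho> \<in> R" for \<rho>
  proof -
    have "M *v of_rat_vec v = of_rat_vec (of_int D *s (G *v v))" for v
      by (simp add: M_def of_rat_vec_def matrix_vector_mult_def vec_eq_iff of_rat_sum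
          of_rat_mult sum_distrib_left mult.assoc)
    then show ?thesis
      using xq[OF \<rho>, symmetric] yq[OF \<rho>] g(2)[OF \<rho>] D(1)
      by (simp add: G_def matrix_works[OF g(1)] of_rat_vec_scale of_rat_of_int_eq)
  qed
  ultimately show thesis using D(1) by (intro that[of "nat D" M]) auto
qed

lemma transpose_mult_vec_in_lattice:
  assumes "\<And>i j. M $ i $ j \<in> \<int>" "m \<in> lattice"
  shows "transpose M *v m \<in> lattice"
  using assms by (auto simp: lattice_def matrix_vector_mult_def transpose_def
      intro!: Ints_sum Ints_mult)

lemma transpose_mult_vec_rational:
  fixes M :: "real^'n^'n"
  assumes "\<And>i j. M $ i $ j \<in> \<int>" "\<And>i. m $ i \<in> \<rat>"
  shows "(transpose M *v m) $ i \<in> \<rat>"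
  using assms Ints_subset_Rats
  by (auto simp: matrix_vector_mult_def transpose_def intro!: Rats_sum Rats_mult)

lemma inner_transpose_mult_vec:
  fixes M :: "real^'n^'m"
  assumes "M *v u = c *\<^sub>R v"
  shows "inner (transpose M *v m) u = c * inner m v"
  using assms by (simp add: dot_lmul_matrix)

section \<open>Divisor classes and their pullback\<close>

lemma Qdiv_pullback: "Qdiv \<Sigma>2 a \<Longrightarrow> Qdiv \<Sigma>1 (pullback \<Sigma>1 \<Psi> a)"
  by (auto simp: Qdiv_def pullback_def)

lemma pullback_diff:
  "pullback \<Sigma> \<Psi> (\<lambda>\<rho>. b \<rho> - a \<rho>) = (\<lambda>\<rho>. pullback \<Sigma> \<Psi> b \<rho> - pullback \<Sigma> \<Psi> a \<rho>)"
  by (auto simp: pullback_def)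

lemma pullback_mult: "pullback \<Sigma> \<Psi> (\<lambda>\<rho>. c * D \<rho>) = (\<lambda>\<rho>. c * pullback \<Sigma> \<Psi> D \<rho>)"
  by (auto simp: pullback_def)

lemma pullback_pullback_inverse:
  assumes "\<And>\<rho>. \<rho> \<in> rays \<Sigma>1 \<Longrightarrow> \<Psi> \<rho> \<in> rays \<Sigma>2 \<and> \<Phi> (\<Psi> \<rho>) = \<rho>"
    and "\<And>\<rho>. \<rho> \<notin> rays \<Sigma>1 \<Longrightarrow> b \<rho> = 0"
  shows "pullback \<Sigma>1 \<Psi> (pullback \<Sigma>2 \<Phi> b) = b"
  using assms by (auto simp: pullback_def)

lemma Qdiv_scale_cartier: "cartier \<Sigma> D \<Longrightarrow> q \<in> \<rat> \<Longrightarrow> Qdiv \<Sigma> (\<lambda>\<rho>. q * D \<rho>)"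
  using Ints_subset_Rats by (auto simp: Qdiv_def cartier_def intro!: Rats_mult)

lemma PicQ_subset_ClQ: "PicQ \<Sigma> \<subseteq> ClQ \<Sigma>"
  by (auto simp: PicQ_def ClQ_def Qdiv_scale_cartier)

lemma AmpQ_subset_PicQ: "AmpQ \<Sigma> \<subseteq> PicQ \<Sigma>"
  by (auto simp: AmpQ_def PicQ_def)

section \<open>Amply equivalent fans\<close>

definition in_some_cone :: "(real^'n) set set \<Rightarrow> (real^'n) set set \<Rightarrow> bool" where
  "in_some_cone \<Sigma> C \<longleftrightarrow> (\<exists>\<sigma>\<in>\<Sigma>. C \<subseteq> cone_rays \<Sigma> \<sigma>)"

text \<open>A minimal set of rays not lying in a common cone is a primitive collection.\<close>
lemma in_some_cone_iff_no_primitive_collection: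
  assumes fan: "is_fan \<Sigma>" and C: "C \<subseteq> rays \<Sigma>"
  shows "in_some_cone \<Sigma> C \<longleftrightarrow> (\<forall>P\<subseteq>C. \<not> primitive_collection \<Sigma> P)"
proof
  assume "in_some_cone \<Sigma> C"
  then show "\<forall>P\<subseteq>C. \<not> primitive_collection \<Sigma> P"
    by (auto simp: in_some_cone_def primitive_collection_def)
next
  assume no_prim: "\<forall>P\<subseteq>C. \<not> primitive_collection \<Sigma> P"
  show "in_some_cone \<Sigma> C"
  proof (rule ccontr)
    assume "\<not> in_some_cone \<Sigma> C"
    then obtain P where P: "P \<subseteq> C" "\<not> in_some_cone \<Sigma> P"
      and min: "\<And>Q. Q \<subseteq> C \<Longrightarrow> \<not> in_some_cone \<Sigma> Q \<Longrightarrow> card P \<le> card Q"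
      using ex_has_least_nat[of "\<lambda>P. P \<subseteq> C \<and> \<not> in_some_cone \<Sigma> P" C card] by blast
    have "finite C" using finite_subset[OF C finite_rays[OF fan]] .
    have "in_some_cone \<Sigma> Q" if "Q \<subset> P" for Q
      using min[of Q] psubset_card_mono[OF finite_subset[OF _ \<open>finite C\<close>] that] that P(1)
      by fastforce
    then have "primitive_collection \<Sigma> P"
      using P C by (auto simp: primitive_collection_def in_some_cone_def)
    then show False using no_prim P(1) by blast
  qed
qed

locale amply_equivalent_fans =
  fixes \<Sigma>1 \<Sigma>2 :: "(real^'n) set set" and \<Psi> :: "(real^'n) set \<Rightarrow> (real^'n) set"
  assumes amply_equivalent: "amply_equivalent \<Sigma>1 \<Sigma>2 \<Psi>"
begin

abbreviation "\<Phi> \<equiv> inv_into (rays \<Sigma>1) \<Psi>"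

lemma
  shows complete1: "complete_fan \<Sigma>1" and complete2: "complete_fan \<Sigma>2"
    and fan1: "is_fan \<Sigma>1" and fan2: "is_fan \<Sigma>2"
    and bij: "bij_betw \<Psi> (rays \<Sigma>1) (rays \<Sigma>2)"
    and primitive_iff:
      "\<And>C. C \<subseteq> rays \<Sigma>1 \<Longrightarrow> primitive_collection \<Sigma>1 C \<longleftrightarrow> primitive_collection \<Sigma>2 (\<Psi> ` C)"
    and relation_iff: "\<And>a :: (real^'n) set \<Rightarrow> int.
        (\<Sum>\<rho>\<in>rays \<Sigma>1. of_int (a \<rho>) *\<^sub>R prim_gen \<rho>) = 0 \<longleftrightarrow>
        (\<Sum>\<rho>\<in>rays \<Sigma>1. of_int (a \<rho>) *\<^sub>R prim_gen (\<Psi> \<rho>)) = 0"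
  using amply_equivalent by (auto simp: amply_equivalent_def complete_fan_def)

lemma Psi_in_rays: "\<rho> \<in> rays \<Sigma>1 \<Longrightarrow> \<Psi> \<rho> \<in> rays \<Sigma>2"
  using bij by (auto simp: bij_betw_def)

lemma Phi_in_rays: "\<rho> \<in> rays \<Sigma>2 \<Longrightarrow> \<Phi> \<rho> \<in> rays \<Sigma>1"
  using bij by (auto simp: bij_betw_def inv_into_into)

lemma Phi_Psi [simp]: "\<rho> \<in> rays \<Sigma>1 \<Longrightarrow> \<Phi> (\<Psi> \<rho>) = \<rho>"
  using bij by (simp add: bij_betw_def)

lemma Psi_Phi [simp]: "\<rho> \<in> rays \<Sigma>2 \<Longrightarrow> \<Psi> (\<Phi> \<rho>) = \<rho>"
  using bij by (simp add: bij_betw_def f_inv_into_f)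

lemma amply_equivalent_fans_sym: "amply_equivalent_fans \<Sigma>2 \<Sigma>1 \<Phi>"
proof -
  have "primitive_collection \<Sigma>2 C \<longleftrightarrow> primitive_collection \<Sigma>1 (\<Phi> ` C)"
    if C: "C \<subseteq> rays \<Sigma>2" for C
  proof -
    have "\<Phi> ` C \<subseteq> rays \<Sigma>1" "\<Psi> ` \<Phi> ` C = C"
      using C Phi_in_rays by (force simp: image_image)+
    then show ?thesis using primitive_iff by metis
  qed
  moreover have "(\<Sum>\<rho>\<in>rays \<Sigma>2. of_int (a \<rho>) *\<^sub>R prim_gen \<rho>) = 0 \<longleftrightarrow>
        (\<Sum>\<rho>\<in>rays \<Sigma>2. of_int (a \<rho>) *\<^sub>R prim_gen (\<Phi> \<rho>)) = 0" for a :: "(real^'n) set \<Rightarrow> int"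
    using relation_iff[of "a \<circ> \<Psi>"]
    by (simp add: sum.reindex_bij_betw[OF bij, symmetric] cong: sum.cong)
  ultimately show ?thesis
    using complete1 complete2 bij_betw_inv_into[OF bij]
    by (simp add: amply_equivalent_fans_def amply_equivalent_def)
qed

lemma in_some_cone_image:
  assumes C: "C \<subseteq> rays \<Sigma>1" and "in_some_cone \<Sigma>1 C"
  shows "in_some_cone \<Sigma>2 (\<Psi> ` C)"
proof -
  have "\<Psi> ` C \<subseteq> rays \<Sigma>2" using C Psi_in_rays by blast
  moreover have "\<not> primitive_collection \<Sigma>2 P" if "P \<subseteq> \<Psi> ` C" for P
  proof -
    obtain Q where "Q \<subseteq> C" "P = \<Psi> ` Q" using \<open>P \<subseteq> \<Psi> ` C\<close> by (auto simp: subset_image_iff)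
    then show ?thesis
      using assms primitive_iff[of Q] in_some_cone_iff_no_primitive_collection[OF fan1 C] by auto
  qed
  ultimately show ?thesis using in_some_cone_iff_no_primitive_collection[OF fan2] by blast
qed

lemma integer_matrix:
  obtains k :: nat and M :: "real^'n^'n"
  where "k > 0" "\<And>i j. M $ i $ j \<in> \<int>"
    "\<And>\<rho>. \<rho> \<in> rays \<Sigma>1 \<Longrightarrow> M *v prim_gen \<rho> = real k *\<^sub>R prim_gen (\<Psi> \<rho>)"
proof (rule integer_matrix_transfer[where R = "rays \<Sigma>1" and x = prim_gen and y = "\<lambda>\<rho>. prim_gen (\<Psi> \<rho>)"])
  show "finite (rays \<Sigma>1)" by (rule finite_rays[OF fan1])
  show "prim_gen \<rho> \<in> lattice" if "\<rho> \<in> rays \<Sigma>1" for \<rho>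
    by (rule prim_gen_in_lattice[OF fan1 that])
  show "prim_gen (\<Psi> \<rho>) \<in> lattice" if "\<rho> \<in> rays \<Sigma>1" for \<rho>
    by (rule prim_gen_in_lattice[OF fan2 Psi_in_rays[OF that]])
  show "(\<Sum>\<rho>\<in>rays \<Sigma>1. of_int (a \<rho>) *\<^sub>R prim_gen (\<Psi> \<rho>)) = 0"
    if "(\<Sum>\<rho>\<in>rays \<Sigma>1. of_int (a \<rho>) *\<^sub>R prim_gen \<rho>) = 0" for a
    using relation_iff[of a] that by blast
qed (rule that)

text \<open>Such a matrix is surjective, since its image contains the generators of all rays of the
  complete fan \<open>\<Sigma>2\<close>; hence it maps spanning sets of generators to spanning sets.\<close>
lemma span_prim_gen_image:
  assumes S: "S \<subseteq> rays \<Sigma>1" and span_S: "span (prim_gen ` S) = UNIV"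
  shows "span (prim_gen ` \<Psi> ` S) = UNIV"
proof -
  obtain M k where k: "k > 0"
    and M: "\<And>\<rho>. \<rho> \<in> rays \<Sigma>1 \<Longrightarrow> M *v prim_gen \<rho> = real k *\<^sub>R prim_gen (\<Psi> \<rho>)"
    using integer_matrix by metis
  have lin: "linear ((*v) M)" by (rule matrix_vector_mul_linear)
  have "prim_gen ` rays \<Sigma>2 \<subseteq> range ((*v) M)"
  proof
    fix u assume "u \<in> prim_gen ` rays \<Sigma>2"
    then obtain \<rho> where \<rho>: "\<rho> \<in> rays \<Sigma>2" "u = prim_gen \<rho>" by blast
    then have "u = M *v ((1 / real k) *\<^sub>R prim_gen (\<Phi> \<rho>))"
      using M[OF Phi_in_rays[OF \<rho>(1)]] k by (simp add: matrix_vector_mult_scaleR)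
    then show "u \<in> range ((*v) M)" by blast
  qed
  then have "span (prim_gen ` rays \<Sigma>2) \<subseteq> range ((*v) M)"
    using span_minimal linear_subspace_image[OF lin subspace_UNIV] by blast
  then have "UNIV = (*v) M ` span (prim_gen ` S)"
    using complete_fan_span_prim_gens[OF complete2] span_S by auto
  also have "\<dots> = span ((*v) M ` prim_gen ` S)"
    by (rule span_linear_image[OF lin, symmetric])
  also have "\<dots> \<subseteq> span (prim_gen ` \<Psi> ` S)"
  proof (rule span_minimal[OF _ subspace_span])
    show "(*v) M ` prim_gen ` S \<subseteq> span (prim_gen ` \<Psi> ` S)"
    proof clarify
      fix \<rho> assume "\<rho> \<in> S"
      then have "M *v prim_gen \<rho> = real k *\<^sub>R prim_gen (\<Psi> \<rho>)" using S M by blast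
      also have "\<dots> \<in> span (prim_gen ` \<Psi> ` S)"
        using \<open>\<rho> \<in> S\<close> by (intro span_mul span_base) blast
      finally show "M *v prim_gen \<rho> \<in> span (prim_gen ` \<Psi> ` S)" .
    qed
  qed
  finally show ?thesis by blast
qed

lemma full_dim_cone_image:
  assumes \<sigma>1: "\<sigma>1 \<in> \<Sigma>1" "aff_dim \<sigma>1 = int CARD('n)"
    and \<sigma>2: "\<sigma>2 \<in> \<Sigma>2" "\<Psi> ` cone_rays \<Sigma>1 \<sigma>1 \<subseteq> cone_rays \<Sigma>2 \<sigma>2"
  shows "aff_dim \<sigma>2 = int CARD('n)"
proof -
  have "span (prim_gen ` \<Psi> ` cone_rays \<Sigma>1 \<sigma>1) = UNIV"
    using full_dim_cone_span_prim_gens[OF fan1 \<sigma>1]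
    by (intro span_prim_gen_image) (auto simp: cone_rays_def)
  moreover have "prim_gen ` \<Psi> ` cone_rays \<Sigma>1 \<sigma>1 \<subseteq> \<sigma>2"
    using \<sigma>2(2) prim_gen_in_cone[OF fan2] by blast
  ultimately have "span \<sigma>2 = UNIV" by (metis span_mono top.extremum_uniqueI)
  then show ?thesis
    using full_aff_dim_iff_span_UNIV[OF fan_cone_contains_0[OF fan2 \<sigma>2(1)]] by simp
qed

lemma full_dim_cone_correspondence:
  assumes \<sigma>1: "\<sigma>1 \<in> \<Sigma>1" "aff_dim \<sigma>1 = int CARD('n)"
  obtains \<sigma>2 where "\<sigma>2 \<in> \<Sigma>2" "aff_dim \<sigma>2 = int CARD('n)"
    "\<And>\<rho>. \<rho> \<in> rays \<Sigma>1 \<Longrightarrow> \<rho> \<subseteq> \<sigma>1 \<longleftrightarrow> \<Psi> \<rho> \<subseteq> \<sigma>2"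
proof -
  interpret sym: amply_equivalent_fans \<Sigma>2 \<Sigma>1 \<Phi> by (rule amply_equivalent_fans_sym)
  let ?C1 = "cone_rays \<Sigma>1 \<sigma>1"
  have "in_some_cone \<Sigma>2 (\<Psi> ` ?C1)"
    using \<sigma>1 by (intro in_some_cone_image) (auto simp: in_some_cone_def cone_rays_def)
  then obtain \<sigma>2 where \<sigma>2: "\<sigma>2 \<in> \<Sigma>2" "\<Psi> ` ?C1 \<subseteq> cone_rays \<Sigma>2 \<sigma>2"
    by (auto simp: in_some_cone_def)
  let ?C2 = "cone_rays \<Sigma>2 \<sigma>2"
  have "in_some_cone \<Sigma>1 (\<Phi> ` ?C2)"
    using \<sigma>2 by (intro sym.in_some_cone_image) (auto simp: in_some_cone_def cone_rays_def)
  then obtain \<sigma>3 where \<sigma>3: "\<sigma>3 \<in> \<Sigma>1" "\<Phi> ` ?C2 \<subseteq> cone_rays \<Sigma>1 \<sigma>3"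
    by (auto simp: in_some_cone_def)
  have in_\<sigma>3: "\<rho> \<in> cone_rays \<Sigma>1 \<sigma>3" if "\<rho> \<in> rays \<Sigma>1" "\<Psi> \<rho> \<in> ?C2" for \<rho>
    using that \<sigma>3(2) Phi_Psi[of \<rho>] by blast
  have "?C1 \<subseteq> cone_rays \<Sigma>1 \<sigma>3"
  proof
    fix \<rho> assume "\<rho> \<in> ?C1"
    moreover from this have "\<rho> \<in> rays \<Sigma>1" by (simp add: cone_rays_def)
    ultimately show "\<rho> \<in> cone_rays \<Sigma>1 \<sigma>3" using \<sigma>2(2) by (intro in_\<sigma>3) blast+
  qed
  then have "\<sigma>3 = \<sigma>1" using full_dim_cone_eqI[OF fan1 \<sigma>1 \<sigma>3(1)] by simp
  have iff: "\<rho> \<subseteq> \<sigma>1 \<longleftrightarrow> \<Psi> \<rho> \<subseteq> \<sigma>2" if \<rho>: "\<rho> \<in> rays \<Sigma>1" for \<rho>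
  proof
    assume "\<rho> \<subseteq> \<sigma>1"
    then show "\<Psi> \<rho> \<subseteq> \<sigma>2" using \<rho> \<sigma>2(2) by (auto simp: cone_rays_def)
  next
    assume "\<Psi> \<rho> \<subseteq> \<sigma>2"
    then have "\<rho> \<in> cone_rays \<Sigma>1 \<sigma>3"
      using \<rho> Psi_in_rays[OF \<rho>] by (intro in_\<sigma>3) (auto simp: cone_rays_def)
    then show "\<rho> \<subseteq> \<sigma>1" using \<open>\<sigma>3 = \<sigma>1\<close> by (simp add: cone_rays_def)
  qed
  have "aff_dim \<sigma>2 = int CARD('n)" by (rule full_dim_cone_image[OF \<sigma>1 \<sigma>2])
  with \<sigma>2(1) iff show thesis using that by blast
qed


lemma principal_pullback:
  assumes "principal \<Sigma>2 d"
  shows "principal \<Sigma>1 (pullback \<Sigma>1 \<Psi> d)"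
proof -
  obtain k M where k: "k > 0" and M: "\<And>i j. M $ i $ j \<in> \<int>"
    "\<And>\<rho>. \<rho> \<in> rays \<Sigma>1 \<Longrightarrow> M *v prim_gen \<rho> = real k *\<^sub>R prim_gen (\<Psi> \<rho>)"
    using integer_matrix by blast
  obtain m where m: "\<And>i. m $ i \<in> \<rat>" "\<And>\<rho>. \<rho> \<in> rays \<Sigma>2 \<Longrightarrow> d \<rho> = inner m (prim_gen \<rho>)"
    using assms by (auto simp: principal_def)
  define m1 where "m1 = (1 / real k) *\<^sub>R (transpose M *v m)"
  have "m1 $ i \<in> \<rat>" for i
    using transpose_mult_vec_rational[OF M(1) m(1)] by (simp add: m1_def)
  moreover have "pullback \<Sigma>1 \<Psi> d \<rho> = inner m1 (prim_gen \<rho>)" if \<rho>: "\<rho> \<in> rays \<Sigma>1" for \<rho>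
    using inner_transpose_mult_vec[OF M(2)[OF \<rho>], of m] m(2)[OF Psi_in_rays[OF \<rho>]] \<rho> k
    by (simp add: m1_def pullback_def)
  ultimately show ?thesis by (auto simp: principal_def)
qed

lemma phi_star_cls:
  assumes a: "Qdiv \<Sigma>2 a"
  shows "phi_star \<Sigma>1 \<Psi> (cls \<Sigma>2 a) = cls \<Sigma>1 (pullback \<Sigma>1 \<Psi> a)"
proof
  show "phi_star \<Sigma>1 \<Psi> (cls \<Sigma>2 a) \<subseteq> cls \<Sigma>1 (pullback \<Sigma>1 \<Psi> a)"
    using Qdiv_pullback principal_pullback
    by (fastforce simp: phi_star_def cls_def pullback_diff[symmetric])
next
  interpret sym: amply_equivalent_fans \<Sigma>2 \<Sigma>1 \<Phi> by (rule amply_equivalent_fans_sym)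
  show "cls \<Sigma>1 (pullback \<Sigma>1 \<Psi> a) \<subseteq> phi_star \<Sigma>1 \<Psi> (cls \<Sigma>2 a)"
  proof
    fix c assume "c \<in> cls \<Sigma>1 (pullback \<Sigma>1 \<Psi> a)"
    then have c: "Qdiv \<Sigma>1 c" "principal \<Sigma>1 (\<lambda>\<rho>. c \<rho> - pullback \<Sigma>1 \<Psi> a \<rho>)"
      by (auto simp: cls_def)
    have "pullback \<Sigma>2 \<Phi> (pullback \<Sigma>1 \<Psi> a) = a"
      using a Phi_in_rays by (intro pullback_pullback_inverse) (auto simp: Qdiv_def)
    then have "principal \<Sigma>2 (\<lambda>\<rho>. pullback \<Sigma>2 \<Phi> c \<rho> - a \<rho>)"
      using sym.principal_pullback[OF c(2)] by (simp add: pullback_diff)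
    then have "pullback \<Sigma>2 \<Phi> c \<in> cls \<Sigma>2 a"
      using Qdiv_pullback[OF c(1)] by (simp add: cls_def)
    moreover have "pullback \<Sigma>1 \<Psi> (pullback \<Sigma>2 \<Phi> c) = c"
      using c(1) Psi_in_rays by (intro pullback_pullback_inverse) (auto simp: Qdiv_def)
    ultimately show "c \<in> phi_star \<Sigma>1 \<Psi> (cls \<Sigma>2 a)" unfolding phi_star_def by force
  qed
qed


lemma cartier_pullback:
  assumes M: "\<And>i j. M $ i $ j \<in> \<int>"
    "\<And>\<rho>. \<rho> \<in> rays \<Sigma>1 \<Longrightarrow> M *v prim_gen \<rho> = real k *\<^sub>R prim_gen (\<Psi> \<rho>)"
    and D: "cartier \<Sigma>2 D"
  shows "cartier \<Sigma>1 (\<lambda>\<rho>. real k * pullback \<Sigma>1 \<Psi> D \<rho>)"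
  unfolding cartier_def
proof (intro conjI allI impI ballI)
  show "real k * pullback \<Sigma>1 \<Psi> D \<rho> \<in> \<int>" for \<rho>
    using D by (auto simp: cartier_def pullback_def)
  show "real k * pullback \<Sigma>1 \<Psi> D \<rho> = 0" if "\<rho> \<notin> rays \<Sigma>1" for \<rho>
    using that by (simp add: pullback_def)
next
  fix \<sigma>1 assume "\<sigma>1 \<in> \<Sigma>1"
  then have "in_some_cone \<Sigma>2 (\<Psi> ` cone_rays \<Sigma>1 \<sigma>1)"
    by (intro in_some_cone_image) (auto simp: in_some_cone_def cone_rays_def)
  then obtain \<sigma>2 where \<sigma>2: "\<sigma>2 \<in> \<Sigma>2" "\<Psi> ` cone_rays \<Sigma>1 \<sigma>1 \<subseteq> cone_rays \<Sigma>2 \<sigma>2"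
    by (auto simp: in_some_cone_def)
  obtain m where m: "m \<in> lattice" "\<And>\<rho>. \<rho> \<in> cone_rays \<Sigma>2 \<sigma>2 \<Longrightarrow> inner m (prim_gen \<rho>) = - D \<rho>"
    using D \<sigma>2(1) by (auto simp: cartier_def)
  have "inner (transpose M *v m) (prim_gen \<rho>) = - (real k * pullback \<Sigma>1 \<Psi> D \<rho>)"
    if \<rho>: "\<rho> \<in> cone_rays \<Sigma>1 \<sigma>1" for \<rho>
  proof -
    have "\<rho> \<in> rays \<Sigma>1" using \<rho> by (simp add: cone_rays_def)
    then show ?thesis
      using inner_transpose_mult_vec[OF M(2), of \<rho> m] m(2) \<rho> \<sigma>2(2) by (auto simp: pullback_def)
  qed
  then show "\<exists>m\<in>lattice. \<forall>\<rho>\<in>cone_rays \<Sigma>1 \<sigma>1.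
      inner m (prim_gen \<rho>) = - (real k * pullback \<Sigma>1 \<Psi> D \<rho>)"
    using transpose_mult_vec_in_lattice[OF M(1) m(1)] by blast
qed

lemma ample_pullback:
  assumes M: "\<And>i j. M $ i $ j \<in> \<int>"
    "\<And>\<rho>. \<rho> \<in> rays \<Sigma>1 \<Longrightarrow> M *v prim_gen \<rho> = real k *\<^sub>R prim_gen (\<Psi> \<rho>)"
    and k: "k > 0" and D: "ample \<Sigma>2 D"
  shows "ample \<Sigma>1 (\<lambda>\<rho>. real k * pullback \<Sigma>1 \<Psi> D \<rho>)"
  unfolding ample_def
proof (intro ballI impI)
  fix \<sigma>1 assume "\<sigma>1 \<in> \<Sigma>1" "aff_dim \<sigma>1 = int CARD('n)"
  then obtain \<sigma>2 where \<sigma>2: "\<sigma>2 \<in> \<Sigma>2" "aff_dim \<sigma>2 = int CARD('n)"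
    and same_rays: "\<And>\<rho>. \<rho> \<in> rays \<Sigma>1 \<Longrightarrow> \<rho> \<subseteq> \<sigma>1 \<longleftrightarrow> \<Psi> \<rho> \<subseteq> \<sigma>2"
    using full_dim_cone_correspondence by blast
  obtain m where m: "m \<in> lattice" "\<forall>\<rho>\<in>rays \<Sigma>2.
      (\<rho> \<subseteq> \<sigma>2 \<longrightarrow> inner m (prim_gen \<rho>) = - D \<rho>) \<and>
      (\<not> \<rho> \<subseteq> \<sigma>2 \<longrightarrow> inner m (prim_gen \<rho>) > - D \<rho>)"
    using D \<sigma>2 unfolding ample_def by blast
  have "(\<rho> \<subseteq> \<sigma>1 \<longrightarrow> inner (transpose M *v m) (prim_gen \<rho>) = - (real k * pullback \<Sigma>1 \<Psi> D \<rho>)) \<and>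
      (\<not> \<rho> \<subseteq> \<sigma>1 \<longrightarrow> inner (transpose M *v m) (prim_gen \<rho>) > - (real k * pullback \<Sigma>1 \<Psi> D \<rho>))"
    if \<rho>: "\<rho> \<in> rays \<Sigma>1" for \<rho>
  proof -
    have pair: "inner (transpose M *v m) (prim_gen \<rho>) = real k * inner m (prim_gen (\<Psi> \<rho>))"
      by (rule inner_transpose_mult_vec[OF M(2)[OF \<rho>]])
    note m_\<rho> = m(2)[rule_format, OF Psi_in_rays[OF \<rho>]]
    have "real k * - D (\<Psi> \<rho>) < real k * inner m (prim_gen (\<Psi> \<rho>))" if "\<not> \<rho> \<subseteq> \<sigma>1"
      using m_\<rho> same_rays[OF \<rho>] that k by (intro mult_strict_left_mono) simp_all
    then show ?thesis
      unfolding pair using m_\<rho> same_rays[OF \<rho>] \<rho> by (simp add: pullback_def)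
  qed
  then show "\<exists>m\<in>lattice. \<forall>\<rho>\<in>rays \<Sigma>1.
      (\<rho> \<subseteq> \<sigma>1 \<longrightarrow> inner m (prim_gen \<rho>) = - (real k * pullback \<Sigma>1 \<Psi> D \<rho>)) \<and>
      (\<not> \<rho> \<subseteq> \<sigma>1 \<longrightarrow> inner m (prim_gen \<rho>) > - (real k * pullback \<Sigma>1 \<Psi> D \<rho>))"
    using transpose_mult_vec_in_lattice[OF M(1) m(1)] by blast
qed

text \<open>Only a positive multiple of the pullback of a Cartier divisor is known to be Cartier; the
  rational coefficient absorbs the multiple.\<close>
lemma phi_star_cls_cartier:
  assumes "k > 0" "cartier \<Sigma>2 D" "q \<in> \<rat>"
  shows "phi_star \<Sigma>1 \<Psi> (cls \<Sigma>2 (\<lambda>\<rho>. q * D \<rho>)) =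
      cls \<Sigma>1 (\<lambda>\<rho>. (q / real k) * (real k * pullback \<Sigma>1 \<Psi> D \<rho>))"
  using phi_star_cls[OF Qdiv_scale_cartier[OF assms(2,3)]] assms(1)
  by (simp add: pullback_mult)

lemma phi_star_image_PicQ: "phi_star \<Sigma>1 \<Psi> ` PicQ \<Sigma>2 \<subseteq> PicQ \<Sigma>1"
proof clarify
  fix X assume "X \<in> PicQ \<Sigma>2"
  then obtain q D where q: "q \<in> \<rat>" and D: "cartier \<Sigma>2 D" and X: "X = cls \<Sigma>2 (\<lambda>\<rho>. q * D \<rho>)"
    by (auto simp: PicQ_def)
  obtain k M where k: "k > 0" and M: "\<And>i j. M $ i $ j \<in> \<int>"
    "\<And>\<rho>. \<rho> \<in> rays \<Sigma>1 \<Longrightarrow> M *v prim_gen \<rho> = real k *\<^sub>R prim_gen (\<Psi> \<rho>)"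
    using integer_matrix by blast
  have "cartier \<Sigma>1 (\<lambda>\<rho>. real k * pullback \<Sigma>1 \<Psi> D \<rho>)"
    using M D by (rule cartier_pullback)
  moreover have "q / real k \<in> \<rat>" using q by simp
  ultimately show "phi_star \<Sigma>1 \<Psi> X \<in> PicQ \<Sigma>1"
    unfolding X phi_star_cls_cartier[OF k D q] PicQ_def
    by (intro CollectI exI[of _ "q / real k"] exI[of _ "\<lambda>\<rho>. real k * pullback \<Sigma>1 \<Psi> D \<rho>"])
      simp
qed

lemma phi_star_image_AmpQ: "phi_star \<Sigma>1 \<Psi> ` AmpQ \<Sigma>2 \<subseteq> AmpQ \<Sigma>1"
proof clarify
  fix X assume "X \<in> AmpQ \<Sigma>2"
  then obtain q D where q: "q \<in> \<rat>" "q > 0" and D: "cartier \<Sigma>2 D" "ample \<Sigma>2 D"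
    and X: "X = cls \<Sigma>2 (\<lambda>\<rho>. q * D \<rho>)"
    by (auto simp: AmpQ_def)
  obtain k M where k: "k > 0" and M: "\<And>i j. M $ i $ j \<in> \<int>"
    "\<And>\<rho>. \<rho> \<in> rays \<Sigma>1 \<Longrightarrow> M *v prim_gen \<rho> = real k *\<^sub>R prim_gen (\<Psi> \<rho>)"
    using integer_matrix by blast
  have "cartier \<Sigma>1 (\<lambda>\<rho>. real k * pullback \<Sigma>1 \<Psi> D \<rho>)"
    using M D(1) by (rule cartier_pullback)
  moreover have "ample \<Sigma>1 (\<lambda>\<rho>. real k * pullback \<Sigma>1 \<Psi> D \<rho>)"
    using M k D(2) by (rule ample_pullback)
  moreover have "q / real k \<in> \<rat>" "q / real k > 0" using q k by simp_all
  ultimately show "phi_star \<Sigma>1 \<Psi> X \<in> AmpQ \<Sigma>1"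
    unfolding X phi_star_cls_cartier[OF k D(1) q(1)] AmpQ_def
    by (intro CollectI exI[of _ "q / real k"] exI[of _ "\<lambda>\<rho>. real k * pullback \<Sigma>1 \<Psi> D \<rho>"])
      simp
qed

lemma phi_star_phi_star_inverse:
  assumes "Qdiv \<Sigma>1 a"
  shows "phi_star \<Sigma>1 \<Psi> (phi_star \<Sigma>2 \<Phi> (cls \<Sigma>1 a)) = cls \<Sigma>1 a"
proof -
  interpret sym: amply_equivalent_fans \<Sigma>2 \<Sigma>1 \<Phi> by (rule amply_equivalent_fans_sym)
  have "pullback \<Sigma>1 \<Psi> (pullback \<Sigma>2 \<Phi> a) = a"
    using assms Psi_in_rays by (intro pullback_pullback_inverse) (auto simp: Qdiv_def)
  then show ?thesis
    using assms by (simp add: sym.phi_star_cls phi_star_cls Qdiv_pullback)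
qed

lemma phi_star_inverse_phi_star:
  assumes "Qdiv \<Sigma>2 a"
  shows "phi_star \<Sigma>2 \<Phi> (phi_star \<Sigma>1 \<Psi> (cls \<Sigma>2 a)) = cls \<Sigma>2 a"
proof -
  interpret sym: amply_equivalent_fans \<Sigma>2 \<Sigma>1 \<Phi> by (rule amply_equivalent_fans_sym)
  have "pullback \<Sigma>2 \<Phi> (pullback \<Sigma>1 \<Psi> a) = a"
    using assms Phi_in_rays by (intro pullback_pullback_inverse) (auto simp: Qdiv_def)
  then show ?thesis
    using assms by (simp add: sym.phi_star_cls phi_star_cls Qdiv_pullback)
qed

lemma bij_betw_phi_star: "bij_betw (phi_star \<Sigma>1 \<Psi>) (ClQ \<Sigma>2) (ClQ \<Sigma>1)"
proof (rule bij_betw_byWitness[where f' = "phi_star \<Sigma>2 \<Phi>"])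
  interpret sym: amply_equivalent_fans \<Sigma>2 \<Sigma>1 \<Phi> by (rule amply_equivalent_fans_sym)
  show "\<forall>X\<in>ClQ \<Sigma>2. phi_star \<Sigma>2 \<Phi> (phi_star \<Sigma>1 \<Psi> X) = X"
    by (auto simp: ClQ_def phi_star_inverse_phi_star)
  show "\<forall>Y\<in>ClQ \<Sigma>1. phi_star \<Sigma>1 \<Psi> (phi_star \<Sigma>2 \<Phi> Y) = Y"
    by (auto simp: ClQ_def phi_star_phi_star_inverse)
  show "phi_star \<Sigma>1 \<Psi> ` ClQ \<Sigma>2 \<subseteq> ClQ \<Sigma>1"
    by (auto simp: ClQ_def phi_star_cls Qdiv_pullback)
  show "phi_star \<Sigma>2 \<Phi> ` ClQ \<Sigma>1 \<subseteq> ClQ \<Sigma>2"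
    by (auto simp: ClQ_def sym.phi_star_cls Qdiv_pullback)
qed

lemma phi_star_image_eqI:
  assumes "X1 \<subseteq> ClQ \<Sigma>1" "phi_star \<Sigma>1 \<Psi> ` X2 \<subseteq> X1" "phi_star \<Sigma>2 \<Phi> ` X1 \<subseteq> X2"
  shows "phi_star \<Sigma>1 \<Psi> ` X2 = X1"
proof
  show "X1 \<subseteq> phi_star \<Sigma>1 \<Psi> ` X2"
  proof
    fix Y assume "Y \<in> X1"
    then have "Y = phi_star \<Sigma>1 \<Psi> (phi_star \<Sigma>2 \<Phi> Y)"
      using assms(1) by (auto simp: ClQ_def phi_star_phi_star_inverse)
    then show "Y \<in> phi_star \<Sigma>1 \<Psi> ` X2" using assms(3) \<open>Y \<in> X1\<close> by blast
  qed
qed (rule assms(2))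

end

theorem proposition5p28:
  fixes \<Sigma>1 \<Sigma>2 :: "(real^'n) set set"
    and \<Psi> :: "(real^'n) set \<Rightarrow> (real^'n) set"
  assumes "complete_fan \<Sigma>1" and "complete_fan \<Sigma>2"
    and "amply_equivalent \<Sigma>1 \<Sigma>2 \<Psi>"
  shows "(\<forall>a. Qdiv \<Sigma>2 a \<longrightarrow> phi_star \<Sigma>1 \<Psi> (cls \<Sigma>2 a) = cls \<Sigma>1 (pullback \<Sigma>1 \<Psi> a))
       \<and> bij_betw (phi_star \<Sigma>1 \<Psi>) (ClQ \<Sigma>2) (ClQ \<Sigma>1)
       \<and> phi_star \<Sigma>1 \<Psi> ` PicQ \<Sigma>2 = PicQ \<Sigma>1
       \<and> phi_star \<Sigma>1 \<Psi> ` AmpQ \<Sigma>2 = AmpQ \<Sigma>1"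
proof -
  interpret amply_equivalent_fans \<Sigma>1 \<Sigma>2 \<Psi>
    using assms(3) by (rule amply_equivalent_fans.intro)
  interpret sym: amply_equivalent_fans \<Sigma>2 \<Sigma>1 \<Phi>
    by (rule amply_equivalent_fans_sym)
  have "phi_star \<Sigma>1 \<Psi> ` PicQ \<Sigma>2 = PicQ \<Sigma>1"
    using PicQ_subset_ClQ phi_star_image_PicQ sym.phi_star_image_PicQ
    by (rule phi_star_image_eqI)
  moreover have "phi_star \<Sigma>1 \<Psi> ` AmpQ \<Sigma>2 = AmpQ \<Sigma>1"
    using AmpQ_subset_PicQ PicQ_subset_ClQ phi_star_image_AmpQ sym.phi_star_image_AmpQ
    by (intro phi_star_image_eqI) blast+
  ultimately show ?thesis
    using phi_star_cls bij_betw_phi_star by blast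
qed

end
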